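(* Let $G$ and $H$ be two (nonempty) graphs that are not both complete. (i) If $\gamma(G)=1$, then $\mu_t(G+H)=n(G)+n(H)-1$. (ii) If $\gamma(G)\ne 1$ and $\gamma(H)\ne 1$, then $\mu_t(G+H)=n(G)+n(H)-2$.
   Context: All graphs are finite, simple and undirected; $n(G)$ denotes the order and $\gamma(G)$ the domination number of $G$. The join $G+H$ is the graph obtained from disjoint copies of $G$ and $H$ by adding an edge between every vertex of $G$ and every vertex of $H$. Let $F$ be a connected graph and $X\subseteq V(F)$. Two vertices $x,y\in V(F)$ are $X$-visible if there exists a shortest $x,y$-path in $F$ none of whose internal vertices (i.e., vertices other than $x$ and $y$) belongs to $X$. The set $X$ is a total mutual-visibility set of $F$ if every two vertices of $F$ are $X$-visible (the empty set is allowed). The total mutual-visibility number $\mu_t(F)$ is the maximum cardinality of a total mutual-visibility set of $F$. *)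

theory Defs
  imports Main
begin

definition simple_graph :: "'a set \<Rightarrow> ('a \<Rightarrow> 'a \<Rightarrow> bool) \<Rightarrow> bool" where
  "simple_graph V E \<longleftrightarrow> finite V \<and> (\<forall>x y. E x y \<longrightarrow> x \<in> V \<and> y \<in> V)
     \<and> (\<forall>x y. E x y \<longrightarrow> E y x) \<and> (\<forall>x. \<not> E x x)"

definition complete_graph :: "'a set \<Rightarrow> ('a \<Rightarrow> 'a \<Rightarrow> bool) \<Rightarrow> bool" where
  "complete_graph V E \<longleftrightarrow> (\<forall>x\<in>V. \<forall>y\<in>V. x \<noteq> y \<longrightarrow> E x y)"

abbreviation order :: "'a set \<Rightarrow> nat" where
  "order V \<equiv> card V"

definition dominating_set :: "'a set \<Rightarrow> ('a \<Rightarrow> 'a \<Rightarrow> bool) \<Rightarrow> 'a set \<Rightarrow> bool" where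
  "dominating_set V E D \<longleftrightarrow> D \<subseteq> V \<and> (\<forall>v\<in>V. v \<in> D \<or> (\<exists>u\<in>D. E v u))"

definition domination_number :: "'a set \<Rightarrow> ('a \<Rightarrow> 'a \<Rightarrow> bool) \<Rightarrow> nat" where
  "domination_number V E = Min {card D | D. dominating_set V E D}"

definition join_V :: "'a set \<Rightarrow> 'b set \<Rightarrow> ('a + 'b) set" where
  "join_V VG VH = Inl ` VG \<union> Inr ` VH"

fun join_E :: "'a set \<Rightarrow> ('a \<Rightarrow> 'a \<Rightarrow> bool) \<Rightarrow> 'b set \<Rightarrow> ('b \<Rightarrow> 'b \<Rightarrow> bool)
                 \<Rightarrow> ('a + 'b) \<Rightarrow> ('a + 'b) \<Rightarrow> bool" where
  "join_E VG EG VH EH (Inl a) (Inl b) = EG a b"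
| "join_E VG EG VH EH (Inr a) (Inr b) = EH a b"
| "join_E VG EG VH EH (Inl a) (Inr b) = (a \<in> VG \<and> b \<in> VH)"
| "join_E VG EG VH EH (Inr a) (Inl b) = (a \<in> VH \<and> b \<in> VG)"

text \<open>Walks as nonempty vertex lists; length of a walk = length xs - 1.\<close>
definition walk :: "'a set \<Rightarrow> ('a \<Rightarrow> 'a \<Rightarrow> bool) \<Rightarrow> 'a list \<Rightarrow> bool" where
  "walk V E xs \<longleftrightarrow> xs \<noteq> [] \<and> set xs \<subseteq> V \<and> (\<forall>i. Suc i < length xs \<longrightarrow> E (xs ! i) (xs ! Suc i))"

definition walk_between :: "'a set \<Rightarrow> ('a \<Rightarrow> 'a \<Rightarrow> bool) \<Rightarrow> 'a \<Rightarrow> 'a \<Rightarrow> 'a list \<Rightarrow> bool" where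
  "walk_between V E x y xs \<longleftrightarrow> walk V E xs \<and> hd xs = x \<and> last xs = y"

text \<open>A shortest x,y-path: an x,y-walk of minimum length (necessarily a path).\<close>
definition shortest_path :: "'a set \<Rightarrow> ('a \<Rightarrow> 'a \<Rightarrow> bool) \<Rightarrow> 'a \<Rightarrow> 'a \<Rightarrow> 'a list \<Rightarrow> bool" where
  "shortest_path V E x y xs \<longleftrightarrow> walk_between V E x y xs \<and>
     (\<forall>ys. walk_between V E x y ys \<longrightarrow> length xs \<le> length ys)"

definition internal_vertices :: "'a list \<Rightarrow> 'a set" where
  "internal_vertices xs = set (butlast (tl xs))"

definition X_visible :: "'a set \<Rightarrow> ('a \<Rightarrow> 'a \<Rightarrow> bool) \<Rightarrow> 'a set \<Rightarrow> 'a \<Rightarrow> 'a \<Rightarrow> bool" where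
  "X_visible V E X x y \<longleftrightarrow> (\<exists>p. shortest_path V E x y p \<and> internal_vertices p \<inter> X = {})"

definition total_mutual_visibility_set :: "'a set \<Rightarrow> ('a \<Rightarrow> 'a \<Rightarrow> bool) \<Rightarrow> 'a set \<Rightarrow> bool" where
  "total_mutual_visibility_set V E X \<longleftrightarrow> X \<subseteq> V \<and> (\<forall>x\<in>V. \<forall>y\<in>V. X_visible V E X x y)"

definition mu_t :: "'a set \<Rightarrow> ('a \<Rightarrow> 'a \<Rightarrow> bool) \<Rightarrow> nat" where
  "mu_t V E = Max {card X | X. total_mutual_visibility_set V E X}"

end

theory Submission
  imports Defs
begin

text \<open>In a graph of diameter at most two, two nonadjacent vertices are joined by shortest paths
  of length two only, so a set X is a total mutual-visibility set iff every nonadjacent pair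
  has a common neighbour outside X. The join G + H has diameter at most two. If G has a
  universal vertex u, removing u alone works, while removing nothing fails because G + H is not
  complete. If neither G nor H has a universal vertex, neither has G + H; then a set missing
  only one vertex w fails at w and a non-neighbour of w, whereas removing one vertex from each
  side works.\<close>

definition universal_vertex :: "'a set \<Rightarrow> ('a \<Rightarrow> 'a \<Rightarrow> bool) \<Rightarrow> 'a \<Rightarrow> bool" where
  "universal_vertex V E u \<longleftrightarrow> u \<in> V \<and> (\<forall>v\<in>V. v \<noteq> u \<longrightarrow> E v u)"

definition diameter_le_2 :: "'a set \<Rightarrow> ('a \<Rightarrow> 'a \<Rightarrow> bool) \<Rightarrow> bool" where
  "diameter_le_2 V E \<longleftrightarrow> (\<forall>x\<in>V. \<forall>y\<in>V. x \<noteq> y \<and> \<not> E x y \<longrightarrow> (\<exists>z. E x z \<and> E z y))"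

lemma walk_singleton [simp]: "walk V E [x] \<longleftrightarrow> x \<in> V"
  by (simp add: walk_def)

lemma walk_Cons_Cons [simp]:
  "walk V E (x # y # xs) \<longleftrightarrow> x \<in> V \<and> E x y \<and> walk V E (y # xs)"
  unfolding walk_def
proof (intro iffI conjI allI impI; (elim conjE)?)
  fix i
  assume "\<forall>i. Suc i < length (x # y # xs) \<longrightarrow> E ((x # y # xs) ! i) ((x # y # xs) ! Suc i)"
    and "Suc i < length (y # xs)"
  then show "E ((y # xs) ! i) ((y # xs) ! Suc i)"
    by (metis Suc_less_eq length_Cons nth_Cons_Suc)
next
  fix i
  assume "E x y" "\<forall>i. Suc i < length (y # xs) \<longrightarrow> E ((y # xs) ! i) ((y # xs) ! Suc i)"
    and "Suc i < length (x # y # xs)"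
  then show "E ((x # y # xs) ! i) ((x # y # xs) ! Suc i)" by (cases i) auto
qed (auto dest: spec[of _ 0])

lemma walk_between_length_ge_2:
  assumes "walk_between V E x y p" "x \<noteq> y"
  shows "2 \<le> length p"
  using assms by (cases p) (auto simp: walk_between_def walk_def Suc_le_eq split: if_splits)

lemma walk_between_length_ge_3:
  assumes "walk_between V E x y p" "x \<noteq> y" "\<not> E x y"
  shows "3 \<le> length p"
proof (rule ccontr)
  assume "\<not> 3 \<le> length p"
  with walk_between_length_ge_2[OF assms(1,2)] have "length p = 2" by linarith
  then obtain a b where "p = [a, b]" by (auto simp: numeral_2_eq_2 length_Suc_conv)
  with assms show False by (auto simp: walk_between_def)
qed

lemma shortest_path_self:
  "x \<in> V \<Longrightarrow> shortest_path V E x x [x]"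
  by (auto simp: shortest_path_def walk_between_def walk_def Suc_le_eq)

lemma shortest_path_edge:
  assumes "simple_graph V E" "E x y"
  shows "shortest_path V E x y [x, y]"
proof -
  have "x \<in> V" "y \<in> V" "x \<noteq> y" using assms by (auto simp: simple_graph_def)
  with assms(2) show ?thesis
    using walk_between_length_ge_2 by (fastforce simp: shortest_path_def walk_between_def)
qed

lemma shortest_path_two_steps:
  assumes "simple_graph V E" "x \<noteq> y" "\<not> E x y" "E x z" "E z y"
  shows "shortest_path V E x y [x, z, y]"
proof -
  have "x \<in> V" "z \<in> V" "y \<in> V" using assms(1,4,5) by (auto simp: simple_graph_def)
  with assms(4,5) have "walk_between V E x y [x, z, y]" by (simp add: walk_between_def)
  moreover have "length [x, z, y] \<le> length ys" if "walk_between V E x y ys" for ys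
    using walk_between_length_ge_3[OF that assms(2,3)] by simp
  ultimately show ?thesis by (simp add: shortest_path_def)
qed

lemma shortest_path_nonadjacent:
  assumes "simple_graph V E" "x \<noteq> y" "\<not> E x y" "E x z\<^sub>0" "E z\<^sub>0 y"
    and "shortest_path V E x y p"
  obtains z where "p = [x, z, y]" "E x z" "E z y"
proof -
  have walk: "walk_between V E x y p" and "length p \<le> 3"
    using assms(6) shortest_path_two_steps[OF assms(1-5)] by (auto simp: shortest_path_def)
  with walk_between_length_ge_3 assms(2,3) have "length p = 3" by fastforce
  then obtain a z c where "p = [a, z, c]" by (auto simp: numeral_3_eq_3 length_Suc_conv)
  with walk that show thesis by (auto simp: walk_between_def)
qed

lemma internal_vertices_nonempty:
  assumes "3 \<le> length p"
  shows "internal_vertices p \<noteq> {}"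
proof -
  obtain a b c q where "p = a # b # c # q"
    using assms by (metis Suc_le_length_iff numeral_3_eq_3)
  then show ?thesis by (simp add: internal_vertices_def)
qed

lemma X_visible_adjacent:
  assumes "simple_graph V E" "x \<in> V" "x = y \<or> E x y"
  shows "X_visible V E X x y"
  using assms shortest_path_self shortest_path_edge
  by (fastforce simp: X_visible_def internal_vertices_def)

lemma X_visible_nonadjacent_iff:
  assumes "simple_graph V E" "x \<noteq> y" "\<not> E x y" "E x z\<^sub>0" "E z\<^sub>0 y"
  shows "X_visible V E X x y \<longleftrightarrow> (\<exists>z. E x z \<and> E z y \<and> z \<notin> X)"
proof
  assume "X_visible V E X x y"
  then obtain p where p: "shortest_path V E x y p" "internal_vertices p \<inter> X = {}"
    by (auto simp: X_visible_def)
  then obtain z where "p = [x, z, y]" "E x z" "E z y"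
    using shortest_path_nonadjacent[OF assms] by blast
  with p(2) show "\<exists>z. E x z \<and> E z y \<and> z \<notin> X"
    by (auto simp: internal_vertices_def)
next
  assume "\<exists>z. E x z \<and> E z y \<and> z \<notin> X"
  then show "X_visible V E X x y"
    using shortest_path_two_steps[OF assms(1-3)]
    by (fastforce simp: X_visible_def internal_vertices_def)
qed

lemma total_mutual_visibility_set_iff:
  assumes "simple_graph V E" "diameter_le_2 V E"
  shows "total_mutual_visibility_set V E X \<longleftrightarrow> X \<subseteq> V \<and>
    (\<forall>x\<in>V. \<forall>y\<in>V. x \<noteq> y \<and> \<not> E x y \<longrightarrow> (\<exists>z. E x z \<and> E z y \<and> z \<notin> X))"
  using assms X_visible_adjacent X_visible_nonadjacent_iff
  unfolding total_mutual_visibility_set_def diameter_le_2_def by metis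

lemma not_total_mutual_visibility_set_all:
  assumes "simple_graph V E" "\<not> complete_graph V E"
  shows "\<not> total_mutual_visibility_set V E V"
proof
  assume tmv: "total_mutual_visibility_set V E V"
  obtain x y where xy: "x \<in> V" "y \<in> V" "x \<noteq> y" "\<not> E x y"
    using assms(2) by (auto simp: complete_graph_def)
  with tmv have "X_visible V E V x y" by (simp add: total_mutual_visibility_set_def)
  then obtain p where p: "shortest_path V E x y p" "internal_vertices p \<inter> V = {}"
    by (auto simp: X_visible_def)
  then have walk: "walk V E p" "3 \<le> length p"
    using walk_between_length_ge_3[of V E x y p] xy by (auto simp: shortest_path_def walk_between_def)
  then have "internal_vertices p \<noteq> {}" by (intro internal_vertices_nonempty)
  moreover have "internal_vertices p \<subseteq> V"
    using walk by (auto simp: walk_def internal_vertices_def dest: in_set_butlastD list.set_sel(2))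
  ultimately show False using p(2) by blast
qed

lemma mu_t_eqI:
  assumes "finite V" "total_mutual_visibility_set V E X"
    and "\<And>Y. total_mutual_visibility_set V E Y \<Longrightarrow> card Y \<le> card X"
  shows "mu_t V E = card X"
  unfolding mu_t_def
proof (rule Max_eqI)
  show "finite {card X |X. total_mutual_visibility_set V E X}"
    by (rule finite_subset[of _ "card ` Pow V"])
      (auto simp: total_mutual_visibility_set_def assms(1))
qed (use assms in auto)

lemma diameter_le_2_if_universal_vertex:
  assumes "simple_graph V E" "universal_vertex V E u"
  shows "diameter_le_2 V E"
  using assms unfolding simple_graph_def universal_vertex_def diameter_le_2_def by metis

lemma mu_t_universal_vertex:
  assumes "simple_graph V E" "universal_vertex V E u" "\<not> complete_graph V E"
  shows "mu_t V E = card V - 1"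
proof -
  have fin: "finite V" using assms(1) by (simp add: simple_graph_def)
  have tmv_iff: "total_mutual_visibility_set V E X \<longleftrightarrow> X \<subseteq> V \<and>
      (\<forall>x\<in>V. \<forall>y\<in>V. x \<noteq> y \<and> \<not> E x y \<longrightarrow> (\<exists>z. E x z \<and> E z y \<and> z \<notin> X))" for X
    using total_mutual_visibility_set_iff[OF assms(1) diameter_le_2_if_universal_vertex[OF assms(1,2)]] .
  have tmv: "total_mutual_visibility_set V E (V - {u})"
    unfolding tmv_iff
  proof (intro conjI ballI impI)
    fix x y assume xy: "x \<in> V" "y \<in> V" "x \<noteq> y \<and> \<not> E x y"
    have sym: "E a b \<Longrightarrow> E b a" for a b using assms(1) by (simp add: simple_graph_def)
    have u: "\<forall>v\<in>V. v \<noteq> u \<longrightarrow> E v u" using assms(2) by (simp add: universal_vertex_def)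
    then have "x \<noteq> u" "y \<noteq> u" using xy sym by metis+
    then have "E x u" "E u y" using xy u sym by metis+
    then show "\<exists>z. E x z \<and> E z y \<and> z \<notin> V - {u}" by blast
  qed blast
  have card_remove: "card (V - {u}) = card V - 1"
    using assms(2) fin by (simp add: universal_vertex_def)
  have "card Y \<le> card (V - {u})" if "total_mutual_visibility_set V E Y" for Y
  proof -
    have "Y \<subseteq> V" using that by (simp add: total_mutual_visibility_set_def)
    moreover have "Y \<noteq> V" using that not_total_mutual_visibility_set_all[OF assms(1,3)] by blast
    ultimately have "card Y < card V" using fin by (intro psubset_card_mono) auto
    with card_remove show ?thesis by simp
  qed
  from mu_t_eqI[OF fin tmv this] card_remove show ?thesis by simp
qed

text \<open>If V - X were at most one vertex w, a non-neighbour of w would see w only through a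
  common neighbour outside X, that is, through w itself.\<close>
lemma card_total_mutual_visibility_set_no_universal_vertex:
  assumes "simple_graph V E" "diameter_le_2 V E" "V \<noteq> {}"
    and no_universal: "\<And>u. \<not> universal_vertex V E u"
    and "total_mutual_visibility_set V E X"
  shows "card X + 2 \<le> card V"
proof (rule ccontr)
  have sym: "E a b \<Longrightarrow> E b a" and irrefl: "\<not> E a a" and closed: "E a b \<Longrightarrow> b \<in> V" for a b
    using assms(1) by (auto simp: simple_graph_def)
  have fin: "finite V" and XV: "X \<subseteq> V"
    using assms(1,5) by (auto simp: simple_graph_def total_mutual_visibility_set_def)
  assume "\<not> card X + 2 \<le> card V"
  with fin XV have "card (V - X) \<le> Suc 0" by (simp add: card_Diff_subset finite_subset)
  then have at_most_one: "\<forall>a\<in>V - X. \<forall>b\<in>V - X. a = b"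
    using fin by (simp add: card_le_Suc0_iff_eq)
  obtain w where w: "w \<in> V" "V - X \<subseteq> {w}"
  proof (cases "V - X = {}")
    case True
    with assms(3) that show thesis by blast
  next
    case False
    then obtain w where "w \<in> V - X" by blast
    with at_most_one that show thesis by blast
  qed
  obtain v where v: "v \<in> V" "v \<noteq> w" "\<not> E v w"
    using no_universal[of w] w(1) by (auto simp: universal_vertex_def)
  have "\<forall>x\<in>V. \<forall>y\<in>V. x \<noteq> y \<and> \<not> E x y \<longrightarrow> (\<exists>z. E x z \<and> E z y \<and> z \<notin> X)"
    using assms(5) total_mutual_visibility_set_iff[OF assms(1,2)] by blast
  with v w(1) sym obtain z where "E w z" "z \<notin> X" by blast
  with w closed have "z = w" by blast
  with \<open>E w z\<close> irrefl show False by blast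
qed

lemma domination_number_eq_1_iff:
  assumes "finite V" "V \<noteq> {}"
  shows "domination_number V E = 1 \<longleftrightarrow> (\<exists>u. universal_vertex V E u)"
proof -
  define S where "S = {card D | D. dominating_set V E D}"
  have fin: "finite S"
    unfolding S_def by (rule finite_subset[of _ "card ` Pow V"]) (auto simp: dominating_set_def assms)
  have "card V \<in> S" by (auto simp: S_def dominating_set_def)
  then have min_in: "Min S \<in> S" using fin Min_in by blast
  have pos: "1 \<le> k" if "k \<in> S" for k
    using that assms finite_subset by (fastforce simp: S_def dominating_set_def Suc_le_eq card_gt_0_iff)
  have one_in: "1 \<in> S \<longleftrightarrow> (\<exists>u. universal_vertex V E u)"
  proof
    assume "1 \<in> S"
    then obtain D where "card D = 1" "dominating_set V E D" by (auto simp: S_def)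
    then obtain u where "dominating_set V E {u}" by (metis card_1_singletonE)
    then show "\<exists>u. universal_vertex V E u" by (auto simp: dominating_set_def universal_vertex_def)
  next
    assume "\<exists>u. universal_vertex V E u"
    then obtain u where "dominating_set V E {u}"
      by (auto simp: dominating_set_def universal_vertex_def)
    then show "1 \<in> S" unfolding S_def by force
  qed
  have "Min S = 1 \<longleftrightarrow> 1 \<in> S"
    using min_in pos fin by (metis Min_le antisym)
  with one_in show ?thesis by (simp add: domination_number_def S_def)
qed

lemma simple_graph_join:
  assumes "simple_graph VG EG" "simple_graph VH EH"
  shows "simple_graph (join_V VG VH) (join_E VG EG VH EH)"
proof -
  have "join_E VG EG VH EH x y \<longrightarrow> x \<in> join_V VG VH \<and> y \<in> join_V VG VH \<and>
          join_E VG EG VH EH y x" for x y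
    using assms by (cases x; cases y) (auto simp: simple_graph_def join_V_def)
  moreover have "\<not> join_E VG EG VH EH x x" for x
    using assms by (cases x) (auto simp: simple_graph_def)
  ultimately show ?thesis
    using assms by (auto simp: simple_graph_def join_V_def)
qed

lemma card_join_V:
  "finite VG \<Longrightarrow> finite VH \<Longrightarrow> card (join_V VG VH) = card VG + card VH"
  unfolding join_V_def by (subst card_Un_disjoint) (auto simp: card_image)

lemma diameter_le_2_join:
  assumes "VG \<noteq> {}" "VH \<noteq> {}"
  shows "diameter_le_2 (join_V VG VH) (join_E VG EG VH EH)"
proof -
  obtain g h where "g \<in> VG" "h \<in> VH" using assms by blast
  then show ?thesis
    unfolding diameter_le_2_def join_V_def
    by (auto intro: exI[of _ "Inl g"] exI[of _ "Inr h"])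
qed

lemma complete_graph_join_iff:
  "complete_graph (join_V VG VH) (join_E VG EG VH EH)
     \<longleftrightarrow> complete_graph VG EG \<and> complete_graph VH EH"
proof
  assume "complete_graph (join_V VG VH) (join_E VG EG VH EH)"
  then have "join_E VG EG VH EH x y"
    if "x \<in> join_V VG VH" "y \<in> join_V VG VH" "x \<noteq> y" for x y
    using that by (simp add: complete_graph_def)
  from this[of "Inl _" "Inl _"] this[of "Inr _" "Inr _"]
  show "complete_graph VG EG \<and> complete_graph VH EH"
    by (auto simp: complete_graph_def join_V_def)
next
  assume "complete_graph VG EG \<and> complete_graph VH EH"
  then show "complete_graph (join_V VG VH) (join_E VG EG VH EH)"
    unfolding complete_graph_def join_V_def by (intro ballI impI; elim UnE imageE) auto
qed

lemma universal_vertex_join_Inl_iff: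
  "universal_vertex (join_V VG VH) (join_E VG EG VH EH) (Inl u) \<longleftrightarrow> universal_vertex VG EG u"
  by (auto simp: universal_vertex_def join_V_def)

lemma universal_vertex_join_Inr_iff:
  "universal_vertex (join_V VG VH) (join_E VG EG VH EH) (Inr u) \<longleftrightarrow> universal_vertex VH EH u"
  by (auto simp: universal_vertex_def join_V_def)

lemma total_mutual_visibility_set_join_remove_two:
  assumes "simple_graph VG EG" "simple_graph VH EH" "g \<in> VG" "h \<in> VH"
  shows "total_mutual_visibility_set (join_V VG VH) (join_E VG EG VH EH)
           (join_V VG VH - {Inl g, Inr h})"
proof -
  have "diameter_le_2 (join_V VG VH) (join_E VG EG VH EH)"
    using assms(3,4) by (intro diameter_le_2_join) auto
  note tmv_iff = total_mutual_visibility_set_iff[OF simple_graph_join[OF assms(1,2)] this]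
  show ?thesis
    unfolding tmv_iff
  proof (intro conjI ballI impI)
    fix x y assume xy: "x \<in> join_V VG VH" "y \<in> join_V VG VH"
      "x \<noteq> y \<and> \<not> join_E VG EG VH EH x y"
    show "\<exists>z. join_E VG EG VH EH x z \<and> join_E VG EG VH EH z y \<and>
                z \<notin> join_V VG VH - {Inl g, Inr h}"
    proof (cases x)
      case (Inl a)
      with xy obtain b where "y = Inl b" by (cases y) (auto simp: join_V_def)
      with Inl xy assms(4) show ?thesis by (intro exI[of _ "Inr h"]) (auto simp: join_V_def)
    next
      case (Inr a)
      with xy obtain b where "y = Inr b" by (cases y) (auto simp: join_V_def)
      with Inr xy assms(3) show ?thesis by (intro exI[of _ "Inl g"]) (auto simp: join_V_def)
    qed
  qed blast
qed

lemma mu_t_join_no_universal_vertex: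
  assumes "simple_graph VG EG" "simple_graph VH EH" "VG \<noteq> {}" "VH \<noteq> {}"
    and "\<And>u. \<not> universal_vertex VG EG u" "\<And>u. \<not> universal_vertex VH EH u"
  shows "mu_t (join_V VG VH) (join_E VG EG VH EH) = card VG + card VH - 2"
proof -
  let ?V = "join_V VG VH" and ?E = "join_E VG EG VH EH"
  obtain g h where gh: "g \<in> VG" "h \<in> VH" using assms(3,4) by blast
  have G: "simple_graph ?V ?E" using simple_graph_join[OF assms(1,2)] .
  have fin: "finite VG" "finite VH" using assms(1,2) by (auto simp: simple_graph_def)
  have no_universal: "\<not> universal_vertex ?V ?E w" for w
    using assms(5,6) by (cases w) (simp_all add: universal_vertex_join_Inl_iff universal_vertex_join_Inr_iff)
  have "mu_t ?V ?E = card (?V - {Inl g, Inr h})"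
  proof (rule mu_t_eqI)
    show "finite ?V" using G by (simp add: simple_graph_def)
    show "total_mutual_visibility_set ?V ?E (?V - {Inl g, Inr h})"
      using total_mutual_visibility_set_join_remove_two[OF assms(1,2) gh] .
  next
    fix Y assume "total_mutual_visibility_set ?V ?E Y"
    then have "card Y + 2 \<le> card ?V"
      using card_total_mutual_visibility_set_no_universal_vertex[OF G diameter_le_2_join[OF assms(3,4)]]
        no_universal assms(3) by (auto simp: join_V_def)
    moreover have "card (?V - {Inl g, Inr h}) = card ?V - 2"
      using gh fin by (simp add: card_Diff_subset join_V_def)
    ultimately show "card Y \<le> card (?V - {Inl g, Inr h})" by simp
  qed
  also have "\<dots> = card VG + card VH - 2"
    using gh fin by (simp add: card_Diff_subset card_join_V[symmetric] join_V_def)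
  finally show ?thesis .
qed

theorem corollary2p7:
  fixes VG :: "'a set" and EG :: "'a \<Rightarrow> 'a \<Rightarrow> bool"
    and VH :: "'b set" and EH :: "'b \<Rightarrow> 'b \<Rightarrow> bool"
  assumes "simple_graph VG EG" and "simple_graph VH EH"
    and "VG \<noteq> {}" and "VH \<noteq> {}"
    and "\<not> (complete_graph VG EG \<and> complete_graph VH EH)"
  shows "(domination_number VG EG = 1 \<longrightarrow>
            mu_t (join_V VG VH) (join_E VG EG VH EH) = order VG + order VH - 1)
       \<and> (domination_number VG EG \<noteq> 1 \<and> domination_number VH EH \<noteq> 1 \<longrightarrow>
            mu_t (join_V VG VH) (join_E VG EG VH EH) = order VG + order VH - 2)"
proof -
  let ?V = "join_V VG VH" and ?E = "join_E VG EG VH EH"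
  have fin: "finite VG" "finite VH" using assms(1,2) by (auto simp: simple_graph_def)
  have "mu_t ?V ?E = order VG + order VH - 1" if one: "domination_number VG EG = 1"
  proof -
    obtain u where "universal_vertex VG EG u"
      using domination_number_eq_1_iff[OF fin(1) assms(3), THEN iffD1, OF one] ..
    then have "universal_vertex ?V ?E (Inl u)" by (simp add: universal_vertex_join_Inl_iff)
    moreover have "\<not> complete_graph ?V ?E" using assms(5) by (simp add: complete_graph_join_iff)
    ultimately have "mu_t ?V ?E = card ?V - 1"
      by (rule mu_t_universal_vertex[OF simple_graph_join[OF assms(1,2)]])
    with fin show ?thesis by (simp add: card_join_V)
  qed
  moreover have "mu_t ?V ?E = order VG + order VH - 2"
    if "domination_number VG EG \<noteq> 1 \<and> domination_number VH EH \<noteq> 1"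
  proof -
    have "\<nexists>u. universal_vertex VG EG u" "\<nexists>u. universal_vertex VH EH u"
      using that domination_number_eq_1_iff[OF fin(1) assms(3)]
        domination_number_eq_1_iff[OF fin(2) assms(4)] by (simp_all only: not_False_eq_True)
    with mu_t_join_no_universal_vertex[OF assms(1-4)] show ?thesis by simp
  qed
  ultimately show ?thesis by blast
qed

end
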